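(* Fix $t>0$. The set $\Delta_{t,\mu}$ is invariant under $\lambda\mapsto1/\bar\lambda$, and $$\Delta_{t,\mu}=\{\lambda\in\mathbb C\setminus\{0\}: T(\lambda)<t\}.$$ Moreover, $T(\lambda)>t$ for every $\lambda\in\mathbb C\setminus(\overline{\Delta_{t,\mu}}\cup\{0\})$; $T(\lambda)\ge t$ for every $\lambda\in\partial\Delta_{t,\mu}\cap\mathbb T$; and $T(\lambda)=t$ for every $\lambda\in\partial\Delta_{t,\mu}\setminus\mathbb T$.
   Context: Let $\mu$ be a Borel probability measure on $\mathbb T$. For $r\in(0,\infty)\setminus\{1\}$ and $\theta\in\mathbb R$ let $f(r,\theta)=\frac12\frac{1-r^2}{-\log r}\int_{-\pi}^{\pi}\frac{d\mu(e^{ix})}{|1-re^{i(\theta-x)}|^2}$, and let $f(1^-,\theta)=\int_{-\pi}^{\pi}\frac{d\mu(e^{ix})}{|1-e^{i(\theta-x)}|^2}\in(0,\infty]$. Define $T:\mathbb C\setminus\{0\}\to[0,\infty)$ by $T(re^{i\theta})=1/f(r,\theta)$ if $r\ne1$ and $T(e^{i\theta})=1/f(1^-,\theta)$ (with $1/\infty=0$). Fix $t>0$; let $r_t(\theta)=\sup\{0<r<1: f(r,\theta)<\frac1t\}\in(0,1]$, $U_t=\{\theta\in(-\pi,\pi]: f(1^-,\theta)>\frac1t\}$, and $\Delta_{t,\mu}=\{re^{i\theta}:\theta\in U_t,\ r_t(\theta)<r<1/r_t(\theta)\}$. *)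

theory Defs
  imports "HOL-Probability.Probability"
begin

text \<open>The measure mu is a Borel probability measure on the complex plane
concentrated on the unit circle; a point w = exp(i x) of the circle. Then
exp(i(theta - x)) = exp(i theta) * cnj w.\<close>

definition circ_meas :: "complex measure \<Rightarrow> bool" where
  "circ_meas \<mu> \<longleftrightarrow> prob_space \<mu> \<and> sets \<mu> = sets borel \<and> emeasure \<mu> (sphere 0 1) = 1"

definition fP :: "complex measure \<Rightarrow> real \<Rightarrow> real \<Rightarrow> real" where
  "fP \<mu> r \<theta> = (1/2) * ((1 - r^2) / (- ln r)) *
      integral\<^sup>L \<mu> (\<lambda>w. 1 / (cmod (1 - complex_of_real r * exp (\<i> * complex_of_real \<theta>) * cnj w))\<^sup>2)"

text \<open>f(1^-,theta), valued in (0,inf]; the integrand is +inf where the denominator vanishes.\<close>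
definition fOne :: "complex measure \<Rightarrow> real \<Rightarrow> ennreal" where
  "fOne \<mu> \<theta> = (\<integral>\<^sup>+ w. inverse (ennreal ((cmod (1 - exp (\<i> * complex_of_real \<theta>) * cnj w))\<^sup>2)) \<partial>\<mu>)"

text \<open>T(r e^{i theta}) with r = |z|, theta = Arg z (f is 2 pi-periodic in theta), 1/inf = 0.\<close>
definition Tfun :: "complex measure \<Rightarrow> complex \<Rightarrow> real" where
  "Tfun \<mu> z = (if cmod z = 1 then (if fOne \<mu> (Arg z) = \<infinity> then 0 else 1 / enn2real (fOne \<mu> (Arg z)))
               else 1 / fP \<mu> (cmod z) (Arg z))"

definition r_t :: "complex measure \<Rightarrow> real \<Rightarrow> real \<Rightarrow> real" where
  "r_t \<mu> t \<theta> = Sup {r. 0 < r \<and> r < 1 \<and> fP \<mu> r \<theta> < 1 / t}"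

definition U_t :: "complex measure \<Rightarrow> real \<Rightarrow> real set" where
  "U_t \<mu> t = {\<theta>. - pi < \<theta> \<and> \<theta> \<le> pi \<and> fOne \<mu> \<theta> > ennreal (1 / t)}"

definition Delta :: "complex measure \<Rightarrow> real \<Rightarrow> complex set" where
  "Delta \<mu> t = {complex_of_real r * exp (\<i> * complex_of_real \<theta>) | r \<theta>.
      \<theta> \<in> U_t \<mu> t \<and> r_t \<mu> t \<theta> < r \<and> r < 1 / r_t \<mu> t \<theta>}"

end

theory Submission imports Defs "HOL-Real_Asymp.Real_Asymp" begin

text \<open>With \<open>h(\<rho>) = (1 - \<rho>\<^sup>2) / (-2 log \<rho>)\<close>, extended by \<open>h(1) = 1\<close>, put
\<open>F(z) = h(|z|) \<integral> |1 - z cnj(w)|\<^sup>-\<^sup>2 d\<mu>(w)\<close>. Then \<open>F(r e\<^sup>i\<^sup>\<theta>)\<close> is \<open>f(r,\<theta>)\<close> for \<open>r \<noteq> 1\<close> and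
\<open>f(1\<^sup>-,\<theta>)\<close> for \<open>r = 1\<close>, so \<open>T = 1/F\<close> and the theorem is about the superlevel set \<open>{F > 1/t}\<close>.
The integrand is invariant under \<open>z \<mapsto> 1/cnj(z)\<close> and strictly increasing along rays inside the
disc; hence so is \<open>F\<close>, it increases along each ray up to its boundary value \<open>f(1\<^sup>-,\<theta>)\<close>, and the
superlevel set is exactly \<open>\<Delta>\<^sub>t\<^sub>,\<^sub>\<mu>\<close>. By Fatou \<open>F\<close> is lower semicontinuous, so \<open>\<Delta>\<^sub>t\<^sub>,\<^sub>\<mu>\<close> is open;
off the circle \<open>F\<close> is continuous, and a point of \<open>{F = 1/t}\<close> off the circle is a radial limit
of points of \<open>\<Delta>\<^sub>t\<^sub>,\<^sub>\<mu>\<close>. On the circle, \<open>f(1\<^sup>-,\<cdot>)\<close> has no finite local maximum: bounded values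
near \<open>\<theta>\<^sub>0\<close> force \<open>\<mu>\<close> to vanish near \<open>e\<^sup>i\<^sup>\<theta>\<^sup>0\<close> (by Fubini, since \<open>\<theta> \<mapsto> |1 - e\<^sup>i\<^sup>\<theta> cnj(w)|\<^sup>-\<^sup>2\<close>
is not integrable near \<open>arg w\<close>), and away from \<open>w\<close> this function of \<open>\<theta>\<close> is strictly midpoint
convex.\<close>

section \<open>Real and complex estimates\<close>

definition radial_factor :: "real \<Rightarrow> real" where
  "radial_factor \<rho> = (if \<rho> = 1 then 1 else (1 - \<rho>^2) / (-2 * ln \<rho>))"

lemma radial_factor_pos:
  assumes "\<rho> > 0" shows "radial_factor \<rho> > 0"
proof (cases \<rho> "1::real" rule: linorder_cases)
  case less
  then have "ln \<rho> < 0" "\<rho>^2 < 1" using assms by (auto simp: power_less_one_iff)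
  then show ?thesis by (simp add: radial_factor_def divide_pos_neg)
next
  case greater
  then have "ln \<rho> > 0" "\<rho>^2 > 1" by (auto simp: one_less_power)
  then show ?thesis by (simp add: radial_factor_def divide_neg_pos)
qed (simp add: radial_factor_def)

lemma isCont_radial_factor:
  assumes "\<rho> > 0" shows "isCont radial_factor \<rho>"
proof (cases "\<rho> = 1")
  case True
  have "((\<lambda>\<rho>. (1 - \<rho>^2) / (-2 * ln \<rho>)) \<longlongrightarrow> 1) (at (1::real))"
    by real_asymp
  then have "(radial_factor \<longlongrightarrow> 1) (at 1)"
    by (rule Lim_transform_eventually) (auto simp: radial_factor_def eventually_at_filter)
  then show ?thesis using True by (simp add: isCont_def radial_factor_def)
next
  case False
  have "\<forall>\<^sub>F x in nhds \<rho>. x \<in> {0<..} - {1}"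
    using assms False by (intro eventually_nhds_in_open) auto
  then have "\<forall>\<^sub>F x in nhds \<rho>. radial_factor x = (1 - x^2) / (-2 * ln x)"
    by eventually_elim (auto simp: radial_factor_def)
  moreover have "isCont (\<lambda>x. (1 - x^2) / (-2 * ln x)) \<rho>"
    using assms False by (intro continuous_intros) auto
  ultimately show ?thesis by (subst isCont_cong)
qed

lemma radial_factor_div_sq_tendsto_0: "((\<lambda>\<rho>. radial_factor \<rho> / (\<rho> - 1)^2) \<longlongrightarrow> 0) (at_right 0)"
proof -
  have "((\<lambda>\<rho>. (1 - \<rho>^2) / (-2 * ln \<rho>) / (\<rho> - 1)^2) \<longlongrightarrow> 0) (at_right (0::real))"
    by real_asymp
  moreover have "\<forall>\<^sub>F \<rho> in at_right 0. (1 - \<rho>^2) / (-2 * ln \<rho>) / (\<rho> - 1)^2 = radial_factor \<rho> / (\<rho> - 1)^2"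
    using eventually_at_right_real[OF zero_less_one] by eventually_elim (auto simp: radial_factor_def)
  ultimately show ?thesis by (rule Lim_transform_eventually)
qed

lemma neg_two_ln_less:
  fixes \<rho> :: real
  assumes "0 < \<rho>" "\<rho> < 1" shows "-2 * ln \<rho> < (1 - \<rho>^2) / \<rho>"
proof -
  define g where "g x = 1/x - x + 2 * ln x" for x :: real
  have "DERIV g x :> -((1 - x)^2 / x^2)" if "\<rho> \<le> x" for x
    using that assms unfolding g_def
    by (auto intro!: derivative_eq_intros simp: power2_eq_square field_simps)
  then obtain z where z: "\<rho> < z" "z < 1" "g 1 - g \<rho> = (1 - \<rho>) * -((1 - z)^2 / z^2)"
    using MVT2[OF assms(2)] by force
  then have "g 1 - g \<rho> < 0" using assms by (simp add: mult_pos_neg)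
  then have "g \<rho> > 0" by (simp add: g_def)
  then show ?thesis using assms by (simp add: g_def field_simps power2_eq_square)
qed

lemma one_sub_two_mult_add_sq_pos:
  fixes c x :: real
  assumes "0 < x" "x \<noteq> 1" "c \<le> 1"
  shows "0 < 1 - 2*c*x + x^2"
proof -
  have "1 - 2*c*x + x^2 = (1 - x)^2 + 2*x*(1 - c)" by (simp add: power2_eq_square algebra_simps)
  moreover have "(1 - x)^2 > 0" "2*x*(1 - c) \<ge> 0" using assms by auto
  ultimately show ?thesis by linarith
qed

text \<open>For \<open>|v| = 1\<close> and \<open>c = Re v\<close>, \<open>radial_kernel c \<rho> = h(\<rho>) / |1 - \<rho> v|\<^sup>2\<close>.\<close>

definition radial_kernel :: "real \<Rightarrow> real \<Rightarrow> real" where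
  "radial_kernel c x = (1 - x^2) / ((-2 * ln x) * (1 - 2*c*x + x^2))"

lemma has_real_derivative_radial_kernel:
  fixes x c :: real
  assumes x: "0 < x" "x < 1" and c: "c \<le> 1"
  shows "(radial_kernel c has_real_derivative
      ((1 + c) * ((1 - x)^2 * ((1 - x^2)/x - 2 * ln x)) + (1 - c) * ((1 + x)^2 * ((1 - x^2)/x + 2 * ln x)))
      / ((-2 * ln x) * (1 - 2*c*x + x^2))^2) (at x)"
proof -
  have nz: "(-2 * ln x) * (1 - 2*c*x + x^2) \<noteq> 0"
    using one_sub_two_mult_add_sq_pos[OF x(1) _ c] x by auto
  have d1: "DERIV (\<lambda>x. 1 - x^2) x :> -2*x" by (auto intro!: derivative_eq_intros)
  have d2: "DERIV (\<lambda>x. -2 * ln x) x :> -2/x" using x by (auto intro!: derivative_eq_intros)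
  have d3: "DERIV (\<lambda>x. 1 - 2*c*x + x^2) x :> 2*x - 2*c" by (auto intro!: derivative_eq_intros)
  have "x * ((-2*x) * ((-2 * ln x) * (1 - 2*c*x + x^2)) - (1 - x^2) * ((-2/x) * (1 - 2*c*x + x^2) + (2*x - 2*c) * (-2 * ln x)))
      = x * ((1 + c) * ((1 - x)^2 * ((1 - x^2)/x - 2 * ln x)) + (1 - c) * ((1 + x)^2 * ((1 - x^2)/x + 2 * ln x)))"
    using x by (simp add: algebra_simps power2_eq_square diff_divide_distrib add_divide_distrib)
  then have numer: "(-2*x) * ((-2 * ln x) * (1 - 2*c*x + x^2)) - (1 - x^2) * ((-2/x) * (1 - 2*c*x + x^2) + (2*x - 2*c) * (-2 * ln x))
      = (1 + c) * ((1 - x)^2 * ((1 - x^2)/x - 2 * ln x)) + (1 - c) * ((1 + x)^2 * ((1 - x^2)/x + 2 * ln x))"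
    using x by simp
  show ?thesis unfolding radial_kernel_def[abs_def]
    by (rule DERIV_cong[OF DERIV_divide[OF d1 DERIV_mult[OF d2 d3] nz]]) (unfold numer, simp only: power2_eq_square)
qed

lemma radial_kernel_strict_mono:
  fixes a b c :: real
  assumes "0 < a" "a < b" "b < 1" "-1 \<le> c" "c \<le> 1"
  shows "radial_kernel c a < radial_kernel c b"
proof (rule DERIV_pos_imp_increasing[OF assms(2)])
  fix x assume "a \<le> x" "x \<le> b"
  then have x: "0 < x" "x < 1" using assms by auto
  have q: "(1 - x^2)/x > 0" using x by (simp add: power_less_one_iff)
  have "(1 - x^2)/x - 2 * ln x > 0" using q ln_less_zero[OF x] by linarith
  moreover have "(1 - x^2)/x + 2 * ln x > 0" using neg_two_ln_less[OF x] by linarith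
  ultimately have A: "(1 - x)^2 * ((1 - x^2)/x - 2 * ln x) > 0" and B: "(1 + x)^2 * ((1 - x^2)/x + 2 * ln x) > 0"
    using x by (auto intro!: mult_pos_pos)
  have "(1 + c) * ((1 - x)^2 * ((1 - x^2)/x - 2 * ln x)) + (1 - c) * ((1 + x)^2 * ((1 - x^2)/x + 2 * ln x)) > 0"
  proof (cases "c = 1")
    case False
    have "(1 + c) * ((1 - x)^2 * ((1 - x^2)/x - 2 * ln x)) \<ge> 0"
      using A assms(4) by (simp add: less_imp_le)
    moreover have "(1 - c) * ((1 + x)^2 * ((1 - x^2)/x + 2 * ln x)) > 0"
      using B False assms(5) by simp
    ultimately show ?thesis by linarith
  qed (use A in simp)
  moreover have "((-2 * ln x) * (1 - 2*c*x + x^2))^2 > 0"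
    using one_sub_two_mult_add_sq_pos[OF x(1) _ assms(5)] x by simp
  ultimately show "\<exists>y. DERIV (radial_kernel c) x :> y \<and> 0 < y"
    using has_real_derivative_radial_kernel[OF x assms(5)] by (blast intro: divide_pos_pos)
qed

lemma radial_kernel_inverse:
  assumes "\<rho> > 0" shows "radial_kernel c (1/\<rho>) = radial_kernel c \<rho>"
proof -
  have r2: "\<rho>^2 \<noteq> 0" using assms by simp
  have "radial_kernel c (1/\<rho>)
      = (\<rho>^2 * (1 - (1/\<rho>)^2)) / (\<rho>^2 * ((-2 * ln (1/\<rho>)) * (1 - 2*c*(1/\<rho>) + (1/\<rho>)^2)))"
    unfolding radial_kernel_def using r2 by (rule mult_divide_mult_cancel_left[symmetric])
  also have "\<rho>^2 * (1 - (1/\<rho>)^2) = -(1 - \<rho>^2)" using r2 by (simp add: field_simps)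
  also have "\<rho>^2 * ((-2 * ln (1/\<rho>)) * (1 - 2*c*(1/\<rho>) + (1/\<rho>)^2))
      = -((-2 * ln \<rho>) * (1 - 2*c*\<rho> + \<rho>^2))"
    using assms by (simp add: ln_div field_simps power2_eq_square)
  finally show ?thesis by (simp only: minus_divide_divide radial_kernel_def)
qed

lemma norm_one_minus_of_real_mult_sq:
  fixes v :: complex
  assumes "cmod v = 1"
  shows "(cmod (1 - of_real \<rho> * v))^2 = 1 - 2*\<rho>*Re v + \<rho>^2"
proof -
  have "(Re v)^2 + (Im v)^2 = 1" using assms by (metis cmod_power2 power_one)
  have "(cmod (1 - of_real \<rho> * v))^2 = (1 - \<rho> * Re v)^2 + (\<rho> * Im v)^2"
    by (simp add: cmod_power2)
  also have "\<dots> = 1 - 2*\<rho>*Re v + \<rho>^2 * ((Re v)^2 + (Im v)^2)"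
    by (simp add: power2_eq_square algebra_simps)
  finally show ?thesis using \<open>(Re v)^2 + (Im v)^2 = 1\<close> by simp
qed

lemma norm_one_minus_sq_unit: "cmod u = 1 \<Longrightarrow> (cmod (1 - u))^2 = 2 - 2 * Re u"
  using norm_one_minus_of_real_mult_sq[of u 1] by simp

lemma norm_one_minus_exp_sq_le: "(cmod (1 - exp (\<i> * of_real u)))^2 \<le> u^2"
proof -
  have "(cmod (1 - exp (\<i> * of_real u)))^2 = 2 - 2 * cos u"
    using norm_one_minus_sq_unit[of "exp (\<i> * of_real u)"] by (simp add: Re_exp)
  also have "\<dots> = 4 * (sin (u/2))^2" using cos_double_sin[of "u/2"] by simp
  also have "(sin (u/2))^2 \<le> (u/2)^2"
    using power_mono[OF abs_sin_x_le_abs_x abs_ge_zero, of "u/2" 2] by (simp only: power2_abs)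
  then have "4 * (sin (u/2))^2 \<le> u^2" by (simp add: power_divide)
  finally show ?thesis .
qed

lemma norm_exp_minus_one_le: "cmod (exp (\<i> * of_real u) - 1) \<le> \<bar>u\<bar>"
proof (rule power2_le_imp_le)
  show "(cmod (exp (\<i> * of_real u) - 1))^2 \<le> \<bar>u\<bar>^2"
    using norm_one_minus_exp_sq_le[of u] by (simp add: norm_minus_commute)
qed simp

lemma abs_norm_minus_one_le:
  assumes "cmod w = 1" shows "\<bar>cmod z - 1\<bar> \<le> cmod (1 - z * cnj w)"
  using norm_triangle_ineq3[of 1 "z * cnj w"] assms by (simp add: norm_mult abs_minus_commute)

lemma abs_less_of_cos_less:
  assumes "cos d < cos b" "0 \<le> d" "d \<le> pi" "-pi < b" "b \<le> pi"
  shows "\<bar>b\<bar> < d"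
proof -
  have "cos \<bar>b\<bar> = cos b" by (cases "b \<ge> 0") auto
  then show ?thesis using cos_mono_less_eq[of d "\<bar>b\<bar>"] assms by auto
qed

lemma nn_integral_inverse_sq_shifted:
  fixes \<beta> a b :: real
  assumes ab: "0 < a" "a < b"
  shows "(\<integral>\<^sup>+ \<phi>. ennreal (indicator {a-\<beta>..b-\<beta>} \<phi> / (\<phi>+\<beta>)^2) \<partial>lborel) = ennreal (1/a - 1/b)"
proof -
  have "((\<lambda>\<phi>. 1/(\<phi>+\<beta>)^2) has_integral ((-1/((b-\<beta>)+\<beta>)) - (-1/((a-\<beta>)+\<beta>)))) {a-\<beta>..b-\<beta>}"
  proof (rule fundamental_theorem_of_calculus)
    fix x assume x: "x \<in> {a-\<beta>..b-\<beta>}"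
    then have "((\<lambda>\<phi>. -1/(\<phi>+\<beta>)) has_real_derivative 1/(x+\<beta>)^2) (at x)"
      using ab by (auto intro!: derivative_eq_intros simp: power2_eq_square field_simps)
    then show "((\<lambda>\<phi>. -1/(\<phi>+\<beta>)) has_vector_derivative 1/(x+\<beta>)^2) (at x within {a-\<beta>..b-\<beta>})"
      by (simp add: has_real_derivative_iff_has_vector_derivative has_vector_derivative_at_within)
  qed (use ab in simp)
  then have "((\<lambda>\<phi>. 1/(\<phi>+\<beta>)^2) has_integral (1/a - 1/b)) {a-\<beta>..b-\<beta>}" by simp
  from nn_integral_has_integral_lebesgue[OF _ this] show ?thesis by simp
qed

lemma ennreal_eq_top_of_inverse_le:
  fixes x :: ennreal and \<delta> C :: real
  assumes "\<delta> > 0" and le: "\<And>a. 0 < a \<Longrightarrow> a < \<delta> \<Longrightarrow> ennreal (1/a - C) \<le> x"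
  shows "x = \<infinity>"
proof (rule ccontr)
  assume "x \<noteq> \<infinity>"
  then obtain c where c: "x = ennreal c" "c \<ge> 0" by (cases x) auto
  define S where "S = c + \<bar>C\<bar> + 1/\<delta> + 1"
  have S: "S > 1/\<delta>" "1/\<delta> > 0" using c assms(1) by (auto simp: S_def)
  moreover have "S > 0" using S by linarith
  ultimately have "1/S < 1/(1/\<delta>)" by (intro divide_strict_left_mono) auto
  with \<open>S > 0\<close> have a: "0 < 1/S" "1/S < \<delta>" by simp_all
  have "c + 1 \<le> S - C" using S(2) abs_ge_self[of C] unfolding S_def by linarith
  then have "c + 1 \<le> 1/(1/S) - C" by simp
  then have "ennreal (c + 1) \<le> ennreal (1/(1/S) - C)" by (rule ennreal_leI)
  also have "\<dots> \<le> ennreal c" using le[OF a] c(1) by simp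
  finally show False using c by (simp add: ennreal_le_iff)
qed

text \<open>For \<open>|w| = 1\<close>, \<open>w \<in> arc_nbhd \<theta>\<^sub>0 \<delta>\<close> says that \<open>w\<close> lies on the open arc of angular radius
\<open>\<delta>\<close> around \<open>e\<^sup>i\<^sup>\<theta>\<^sup>0\<close>.\<close>

definition arc_nbhd :: "real \<Rightarrow> real \<Rightarrow> complex set" where
  "arc_nbhd \<theta>0 \<delta> = {w. cos \<delta> < Re (exp (\<i> * of_real \<theta>0) * cnj w)}"

lemma open_arc_nbhd: "open (arc_nbhd \<theta>0 \<delta>)"
  unfolding arc_nbhd_def by (intro open_Collect_less continuous_intros)

lemma nn_integral_inverse_dist_sq_infinite:
  assumes w: "cmod w = 1" and e: "0 < \<epsilon>" "\<epsilon> \<le> 1"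
    and near: "w \<in> arc_nbhd \<theta>0 (\<epsilon>/2)"
  shows "(\<integral>\<^sup>+ \<phi>. indicator {-3*\<epsilon>/4..3*\<epsilon>/4} \<phi> *
            inverse (ennreal ((cmod (1 - exp (\<i> * of_real (\<theta>0 + \<phi>)) * cnj w))^2)) \<partial>lborel) = \<infinity>"
    (is "?I = \<infinity>")
proof -
  define v where "v = exp (\<i> * of_real \<theta>0) * cnj w"
  define \<beta> where "\<beta> = Arg v"
  have "cmod v = 1" using w by (simp add: v_def norm_mult)
  then have ve: "v = exp (\<i> * of_real \<beta>)"
    using rcis_cmod_Arg[of v] by (simp add: \<beta>_def rcis_def cis_conv_exp)
  have "cos (\<epsilon>/2) < Re v" using near by (simp add: arc_nbhd_def v_def)
  then have "cos (\<epsilon>/2) < cos \<beta>" by (simp add: ve Re_exp)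
  then have b: "\<bar>\<beta>\<bar> < \<epsilon>/2"
    by (rule abs_less_of_cos_less) (use e pi_gt3 mpi_less_Arg Arg_le_pi in \<open>auto simp: \<beta>_def\<close>)
  have low: "ennreal (1/a - 4/\<epsilon>) \<le> ?I" if a: "0 < a" "a < \<epsilon>/4" for a
  proof -
    have "ennreal (1/a - 4/\<epsilon>) = (\<integral>\<^sup>+ \<phi>. ennreal (indicator {a-\<beta>..\<epsilon>/4-\<beta>} \<phi> / (\<phi>+\<beta>)^2) \<partial>lborel)"
      using nn_integral_inverse_sq_shifted[OF a, of \<beta>] by simp
    also have "\<dots> \<le> ?I"
    proof (rule nn_integral_mono)
      fix \<phi>
      show "ennreal (indicator {a-\<beta>..\<epsilon>/4-\<beta>} \<phi> / (\<phi>+\<beta>)^2)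
        \<le> indicator {-3*\<epsilon>/4..3*\<epsilon>/4} \<phi> * inverse (ennreal ((cmod (1 - exp (\<i> * of_real (\<theta>0 + \<phi>)) * cnj w))^2))"
      proof (cases "\<phi> \<in> {a-\<beta>..\<epsilon>/4-\<beta>}")
        case True
        then have in2: "\<phi> \<in> {-3*\<epsilon>/4..3*\<epsilon>/4}" and pb: "\<phi> + \<beta> > 0" using b a by auto
        have ex: "exp (\<i> * of_real (\<theta>0 + \<phi>)) * cnj w = exp (\<i> * of_real (\<phi> + \<beta>))"
          using ve by (simp add: v_def distrib_left exp_add mult_ac)
        have dle: "(cmod (1 - exp (\<i> * of_real (\<theta>0 + \<phi>)) * cnj w))^2 \<le> (\<phi>+\<beta>)^2"
          unfolding ex by (rule norm_one_minus_exp_sq_le)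
        have "ennreal (1/(\<phi>+\<beta>)^2) \<le> inverse (ennreal ((cmod (1 - exp (\<i> * of_real (\<theta>0 + \<phi>)) * cnj w))^2))"
        proof (cases "cmod (1 - exp (\<i> * of_real (\<theta>0 + \<phi>)) * cnj w) = 0")
          case False
          then show ?thesis using dle pb
            by (simp add: inverse_ennreal ennreal_leI inverse_eq_divide divide_left_mono)
        qed simp
        then show ?thesis using True in2 by simp
      qed simp
    qed
    finally show ?thesis .
  qed
  show ?thesis by (rule ennreal_eq_top_of_inverse_le[of "\<epsilon>/4" "4/\<epsilon>"]) (use e low in auto)
qed

text \<open>With \<open>v = c + i s\<close> and \<open>e\<^sup>i\<^sup>h = a + i b\<close>, the three denominators are
\<open>|1 - e\<^sup>i\<^sup>h v|\<^sup>2\<close>, \<open>|1 - e\<^sup>-\<^sup>i\<^sup>h v|\<^sup>2\<close> and \<open>|1 - v|\<^sup>2\<close>; \<open>c < a\<close> says that \<open>v\<close> lies outside the arc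
\<open>{e\<^sup>i\<^sup>\<phi> : |\<phi>| < h}\<close>.\<close>

lemma inverse_dist_sq_midpoint_strict:
  fixes c s a b :: real
  assumes u: "c^2 + s^2 = 1" "a^2 + b^2 = 1" and ab: "c < a" "a < 1"
  shows "2 - 2*(a * c - b * s) > 0" "2 - 2*(a * c + b * s) > 0" "2 - 2*c > 0"
    "2/(2 - 2*c) < 1/(2 - 2*(a * c - b * s)) + 1/(2 - 2*(a * c + b * s))"
proof -
  define p where "p = 2 - 2*(a * c - b * s)"
  define q where "q = 2 - 2*(a * c + b * s)"
  define r where "r = 2 - 2*c"
  have "p = (a - c)^2 + (b + s)^2" "q = (a - c)^2 + (b - s)^2"
    unfolding p_def q_def using u by (simp_all add: power2_eq_square algebra_simps)
  moreover have "(a - c)^2 > 0" using ab by simp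
  ultimately have pp: "p > 0" and qp: "q > 0" by (auto intro: add_pos_nonneg)
  then show "2 - 2*(a * c - b * s) > 0" "2 - 2*(a * c + b * s) > 0" by (auto simp: p_def q_def)
  have rp: "r > 0" using ab by (simp add: r_def)
  then show "2 - 2*c > 0" by (simp add: r_def)
  have "r*(p + q) - 2*p*q = 8*((1 - c)*(1 - a * c) - (1 - a * c)^2 + b^2 * s^2)"
    unfolding p_def q_def r_def by (simp add: algebra_simps power2_eq_square)
  also have "b^2 = 1 - a^2" using u by simp
  also have "s^2 = 1 - c^2" using u by simp
  also have "8*((1 - c)*(1 - a * c) - (1 - a * c)^2 + (1 - a^2) * (1 - c^2)) = 8*(1 - a)*((1 - c^2) + (a - c))"
    by (simp add: algebra_simps power2_eq_square)
  also have "\<dots> > 0"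
  proof -
    have "c^2 \<le> 1" using u(1) by (metis le_add_same_cancel1 zero_le_power2)
    then show ?thesis using ab by (intro mult_pos_pos) auto
  qed
  finally have "0 < (r*(p + q) - 2*p*q) / (p*q*r)" using pp qp rp by simp
  also have "\<dots> = 1/p + 1/q - 2/r" using pp qp rp by (simp add: field_simps)
  finally show "2/(2 - 2*c) < 1/(2 - 2*(a * c - b * s)) + 1/(2 - 2*(a * c + b * s))"
    by (simp add: p_def q_def r_def)
qed

definition ray :: "real \<Rightarrow> real \<Rightarrow> complex" where
  "ray \<theta> \<rho> = of_real \<rho> * exp (\<i> * of_real \<theta>)"

lemma ray_Arg_norm: "ray (Arg z) (cmod z) = z"
  using rcis_cmod_Arg[of z] by (simp add: ray_def rcis_def cis_conv_exp)

lemma norm_ray: "\<rho> \<ge> 0 \<Longrightarrow> cmod (ray \<theta> \<rho>) = \<rho>"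
  by (simp add: ray_def norm_mult)

lemma ray_eq_0_iff [simp]: "ray \<theta> \<rho> = 0 \<longleftrightarrow> \<rho> = 0"
  by (simp add: ray_def)

lemma Arg_ray: "r > 0 \<Longrightarrow> -pi < \<theta> \<Longrightarrow> \<theta> \<le> pi \<Longrightarrow> Arg (ray \<theta> r) = \<theta>"
  unfolding ray_def by (rule Arg_unique) auto

lemma dist_ray: "dist (ray \<theta> a) (ray \<theta> b) = \<bar>a - b\<bar>"
proof -
  have "ray \<theta> a - ray \<theta> b = of_real (a - b) * exp (\<i> * of_real \<theta>)" by (simp add: ray_def algebra_simps)
  then show ?thesis by (simp add: dist_norm norm_mult flip: of_real_diff)
qed

lemma inverse_cnj_ray: "\<rho> > 0 \<Longrightarrow> 1 / cnj (ray \<theta> \<rho>) = ray \<theta> (1/\<rho>)"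
  by (simp add: ray_def exp_cnj exp_minus field_simps)

section \<open>Measure-theoretic tools\<close>

lemma tendsto_inverse_ennreal:
  fixes f :: "'a \<Rightarrow> ennreal"
  shows "(f \<longlongrightarrow> a) F \<Longrightarrow> ((\<lambda>x. inverse (f x)) \<longlongrightarrow> inverse a) F"
  using continuous_on_tendsto_compose[OF continuous_on_inverse_ennreal[OF continuous_on_id[of UNIV]], of f a F]
  by simp

lemma (in prob_space) nn_integral_strict_mono_AE:
  assumes [measurable]: "f \<in> borel_measurable M" "g \<in> borel_measurable M"
    and "(\<integral>\<^sup>+ x. f x \<partial>M) \<noteq> \<infinity>" and lt: "AE x in M. f x < g x"
  shows "(\<integral>\<^sup>+ x. f x \<partial>M) < (\<integral>\<^sup>+ x. g x \<partial>M)"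
proof (rule nn_integral_less)
  show "AE x in M. f x \<le> g x" using lt by eventually_elim simp
  show "\<not> (AE x in M. g x \<le> f x)"
  proof
    assume "AE x in M. g x \<le> f x"
    with lt have "AE x in M. False" by eventually_elim simp
    then show False by simp
  qed
qed (use assms in auto)

section \<open>The function \<open>f\<close> in Cartesian coordinates\<close>

locale circle_measure =
  fixes \<mu> :: "complex measure"
  assumes circ_meas: "circ_meas \<mu>"
begin

sublocale prob_space \<mu> using circ_meas by (simp add: circ_meas_def)

lemma sets_eq_borel: "sets \<mu> = sets borel" using circ_meas by (simp add: circ_meas_def)

lemma borel_measurable_of_borel: "f \<in> borel_measurable borel \<Longrightarrow> f \<in> borel_measurable \<mu>"
  using measurable_cong_sets[OF sets_eq_borel refl] by auto

lemma AE_norm_eq_1: "AE w in \<mu>. cmod w = 1"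
proof -
  have "prob (sphere 0 1) = 1" using circ_meas by (simp add: circ_meas_def emeasure_eq_measure)
  then have "AE x in \<mu>. x \<in> sphere 0 1" by (rule AE_prob_1)
  then show ?thesis by eventually_elim simp
qed

text \<open>At \<open>|z| = 1\<close> the kernel is the integrand of \<open>f(1\<^sup>-, \<theta>)\<close>, possibly \<open>\<infinity>\<close>.\<close>

definition kernel :: "complex \<Rightarrow> complex \<Rightarrow> ennreal" where
  "kernel z w = ennreal (radial_factor (cmod z)) * inverse (ennreal ((cmod (1 - z * cnj w))^2))"

definition f_at :: "complex \<Rightarrow> ennreal" where
  "f_at z = (\<integral>\<^sup>+ w. kernel z w \<partial>\<mu>)"

lemma kernel_measurable [measurable]: "kernel z \<in> borel_measurable \<mu>"
proof -
  have "(\<lambda>w. (cmod (1 - z * cnj w))^2) \<in> borel_measurable borel"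
    by (intro borel_measurable_continuous_onI continuous_intros)
  from borel_measurable_of_borel[OF this] show ?thesis unfolding kernel_def[abs_def] by measurable
qed

lemma kernel_off_circle:
  assumes "cmod w = 1" "cmod z \<noteq> 1" "z \<noteq> 0"
  shows "kernel z w = ennreal (radial_factor (cmod z) / (cmod (1 - z * cnj w))^2)"
proof -
  have "cmod (1 - z * cnj w) > 0"
    using abs_norm_minus_one_le[OF assms(1), of z] assms(2) by linarith
  then have d: "(cmod (1 - z * cnj w))^2 > 0" by simp
  have "kernel z w = ennreal (radial_factor (cmod z)) * ennreal (inverse ((cmod (1 - z * cnj w))^2))"
    unfolding kernel_def using d by (simp add: inverse_ennreal)
  also have "\<dots> = ennreal (radial_factor (cmod z) * inverse ((cmod (1 - z * cnj w))^2))"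
    using radial_factor_pos[of "cmod z"] assms(3) d by (simp add: ennreal_mult[symmetric])
  finally show ?thesis by (simp add: divide_inverse)
qed

lemma kernel_pos: "cmod w = 1 \<Longrightarrow> z \<noteq> 0 \<Longrightarrow> kernel z w > 0"
  using radial_factor_pos[of "cmod z"]
  by (simp add: kernel_def ennreal_zero_less_mult_iff ennreal_inverse_positive)

lemma kernel_ray:
  assumes w: "cmod w = 1" and r: "\<rho> > 0" "\<rho> \<noteq> 1"
  shows "kernel (ray \<theta> \<rho>) w = ennreal (radial_kernel (Re (exp (\<i> * of_real \<theta>) * cnj w)) \<rho>)"
proof -
  define v where "v = exp (\<i> * of_real \<theta>) * cnj w"
  have v: "cmod v = 1" using w by (simp add: v_def norm_mult)
  have "ray \<theta> \<rho> * cnj w = of_real \<rho> * v" by (simp add: ray_def v_def mult.assoc)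
  then have "kernel (ray \<theta> \<rho>) w = ennreal (radial_factor \<rho> / (1 - 2*\<rho>*Re v + \<rho>^2))"
    using kernel_off_circle[OF w, of "ray \<theta> \<rho>"] norm_ray[of \<rho> \<theta>] r
    by (simp add: norm_one_minus_of_real_mult_sq[OF v])
  also have "radial_factor \<rho> / (1 - 2*\<rho>*Re v + \<rho>^2) = radial_kernel (Re v) \<rho>"
    using r by (simp add: radial_factor_def radial_kernel_def mult_ac)
  finally show ?thesis by (simp add: v_def)
qed

lemma kernel_tendsto:
  assumes z: "(z \<longlongrightarrow> z0) F" and z0: "z0 \<noteq> 0"
  shows "((\<lambda>x. kernel (z x) w) \<longlongrightarrow> kernel z0 w) F"
  unfolding kernel_def
proof (rule tendsto_mult_ennreal)
  have "((\<lambda>x. radial_factor (cmod (z x))) \<longlongrightarrow> radial_factor (cmod z0)) F"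
    by (rule isCont_tendsto_compose[OF isCont_radial_factor]) (use z0 z in \<open>auto intro: tendsto_intros\<close>)
  then show "((\<lambda>x. ennreal (radial_factor (cmod (z x)))) \<longlongrightarrow> ennreal (radial_factor (cmod z0))) F"
    by (rule tendsto_ennrealI)
  show "((\<lambda>x. inverse (ennreal ((cmod (1 - z x * cnj w))^2)))
      \<longlongrightarrow> inverse (ennreal ((cmod (1 - z0 * cnj w))^2))) F"
    using z by (intro tendsto_inverse_ennreal tendsto_ennrealI tendsto_intros)
qed (use radial_factor_pos[of "cmod z0"] z0 in auto)

lemma f_at_pos: "z \<noteq> 0 \<Longrightarrow> f_at z > 0"
proof (rule ccontr)
  assume z: "z \<noteq> 0" and "\<not> f_at z > 0"
  then have "AE w in \<mu>. kernel z w = 0" unfolding f_at_def by (simp add: nn_integral_0_iff_AE)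
  moreover have "AE w in \<mu>. kernel z w > 0" using AE_norm_eq_1 by eventually_elim (use kernel_pos z in auto)
  ultimately have "AE w in \<mu>. False" by eventually_elim auto
  then show False by simp
qed

lemma kernel_le_off_circle:
  assumes "cmod w = 1" "z \<noteq> 0" "0 < e" "e \<le> \<bar>cmod z - 1\<bar>"
  shows "kernel z w \<le> ennreal (radial_factor (cmod z) / e^2)"
proof -
  have le: "e \<le> cmod (1 - z * cnj w)"
    using abs_norm_minus_one_le[OF assms(1), of z] assms(4) by linarith
  then have "e^2 \<le> (cmod (1 - z * cnj w))^2" using assms(3) by (intro power_mono) auto
  moreover have "0 < (cmod (1 - z * cnj w))^2 * e^2"
    using le assms(3) by (intro mult_pos_pos) (auto intro!: zero_less_power)
  ultimately have "radial_factor (cmod z) / (cmod (1 - z * cnj w))^2 \<le> radial_factor (cmod z) / e^2"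
    using radial_factor_pos[of "cmod z"] assms by (intro divide_left_mono) auto
  then show ?thesis using assms by (simp add: kernel_off_circle ennreal_leI)
qed

lemma f_at_le_off_circle:
  assumes "z \<noteq> 0" "cmod z \<noteq> 1"
  shows "f_at z \<le> ennreal (radial_factor (cmod z) / (cmod z - 1)^2)"
proof -
  have "AE w in \<mu>. kernel z w \<le> ennreal (radial_factor (cmod z) / (cmod z - 1)^2)"
    using AE_norm_eq_1
  proof eventually_elim
    case (elim w)
    show ?case using kernel_le_off_circle[OF elim assms(1), of "\<bar>cmod z - 1\<bar>"] assms(2) by simp
  qed
  then have "f_at z \<le> (\<integral>\<^sup>+ w. ennreal (radial_factor (cmod z) / (cmod z - 1)^2) \<partial>\<mu>)"
    unfolding f_at_def by (rule nn_integral_mono_AE)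
  then show ?thesis by (simp add: emeasure_space_1)
qed

lemma f_at_finite_off_circle: "z \<noteq> 0 \<Longrightarrow> cmod z \<noteq> 1 \<Longrightarrow> f_at z < \<infinity>"
  using le_less_trans[OF f_at_le_off_circle] by simp

lemma f_at_ray_eq_fP:
  assumes r: "r > 0" "r \<noteq> 1"
  shows "f_at (ray \<theta> r) = ennreal (fP \<mu> r \<theta>)"
proof -
  define z where "z = ray \<theta> r"
  have cz: "cmod z = r" using r by (simp add: z_def norm_ray)
  define g where "g w = 1 / (cmod (1 - z * cnj w))^2" for w
  have "g \<in> borel_measurable borel" unfolding g_def[abs_def]
    by measurable (intro borel_measurable_continuous_onI continuous_intros)
  then have g[measurable]: "g \<in> borel_measurable \<mu>" by (rule borel_measurable_of_borel)
  have int: "integrable \<mu> (\<lambda>w. radial_factor r * g w)"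
  proof (rule integrable_const_bound[where B = "radial_factor r / (r - 1)^2"])
    show "AE w in \<mu>. norm (radial_factor r * g w) \<le> radial_factor r / (r - 1)^2"
      using AE_norm_eq_1
    proof eventually_elim
      case (elim w)
      have le: "(r - 1)^2 \<le> (cmod (1 - z * cnj w))^2"
        using abs_norm_minus_one_le[OF elim, of z] cz by (metis abs_ge_zero power2_abs power_mono)
      moreover have "(r - 1)^2 > 0" using r by simp
      ultimately have "0 < (cmod (1 - z * cnj w))^2 * (r - 1)^2" by (intro mult_pos_pos) auto
      with le have "radial_factor r / (cmod (1 - z * cnj w))^2 \<le> radial_factor r / (r - 1)^2"
        using radial_factor_pos[OF r(1)] by (intro divide_left_mono) auto
      then show ?case using radial_factor_pos[OF r(1)] by (simp add: g_def)
    qed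
  qed simp
  have "f_at z = (\<integral>\<^sup>+ w. ennreal (radial_factor r * g w) \<partial>\<mu>)"
    unfolding f_at_def
    by (rule nn_integral_cong_AE, use AE_norm_eq_1 in eventually_elim)
       (use r cz in \<open>simp add: kernel_off_circle z_def g_def\<close>)
  also have "\<dots> = ennreal (\<integral> w. radial_factor r * g w \<partial>\<mu>)"
    using int radial_factor_pos[OF r(1)]
    by (intro nn_integral_eq_integral AE_I2 mult_nonneg_nonneg) (auto simp: g_def)
  also have "(\<integral> w. radial_factor r * g w \<partial>\<mu>) = radial_factor r * (\<integral> w. g w \<partial>\<mu>)" by simp
  also have "radial_factor r * (\<integral> w. g w \<partial>\<mu>) = fP \<mu> r \<theta>"
    unfolding fP_def radial_factor_def g_def z_def ray_def using r by simp
  finally show ?thesis by (simp add: z_def)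
qed

lemma f_at_exp_eq_fOne: "f_at (exp (\<i> * of_real \<theta>)) = fOne \<mu> \<theta>"
  unfolding f_at_def fOne_def kernel_def by (simp add: radial_factor_def)

lemma f_at_ray_1: "f_at (ray \<theta> 1) = fOne \<mu> \<theta>"
  by (simp add: ray_def f_at_exp_eq_fOne)

lemma Tfun_eq_f_at:
  assumes "z \<noteq> 0"
  shows "Tfun \<mu> z = (if f_at z = \<infinity> then 0 else 1 / enn2real (f_at z))"
proof (cases "cmod z = 1")
  case True
  then show ?thesis
    using f_at_ray_1[of "Arg z"] ray_Arg_norm[of z] by (simp add: Tfun_def)
next
  case False
  have fP: "f_at z = ennreal (fP \<mu> (cmod z) (Arg z))"
    using f_at_ray_eq_fP[of "cmod z" "Arg z"] ray_Arg_norm[of z] assms False by simp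
  then have "fP \<mu> (cmod z) (Arg z) > 0" using f_at_pos[OF assms] by simp
  then show ?thesis using False fP by (simp add: Tfun_def)
qed

lemma f_at_ray_inverse:
  assumes r: "\<rho> > 0"
  shows "f_at (ray \<theta> (1/\<rho>)) = f_at (ray \<theta> \<rho>)"
proof (cases "\<rho> = 1")
  case False
  have r': "1/\<rho> > 0" "1/\<rho> \<noteq> 1" using r False by auto
  show ?thesis unfolding f_at_def
    by (rule nn_integral_cong_AE, use AE_norm_eq_1 in eventually_elim)
       (simp add: kernel_ray r r' False radial_kernel_inverse)
qed simp

lemma f_at_inverse_cnj:
  assumes "z \<noteq> 0" shows "f_at (1 / cnj z) = f_at z"
  using f_at_ray_inverse[of "cmod z" "Arg z"] inverse_cnj_ray[of "cmod z" "Arg z"] assms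
  by (simp add: ray_Arg_norm)

lemma kernel_ray_strict_mono:
  assumes w: "cmod w = 1" and ab: "0 < a" "a < b" "b < 1"
  shows "kernel (ray \<theta> a) w < kernel (ray \<theta> b) w"
proof -
  have "\<bar>Re (exp (\<i> * of_real \<theta>) * cnj w)\<bar> \<le> 1"
    using abs_Re_le_cmod[of "exp (\<i> * of_real \<theta>) * cnj w"] w by (simp add: norm_mult)
  then have "radial_kernel (Re (exp (\<i> * of_real \<theta>) * cnj w)) a
      < radial_kernel (Re (exp (\<i> * of_real \<theta>) * cnj w)) b"
    using ab by (intro radial_kernel_strict_mono) auto
  moreover have "kernel (ray \<theta> b) w > 0" using kernel_pos[OF w, of "ray \<theta> b"] ab by simp
  ultimately show ?thesis using ab by (simp add: kernel_ray[OF w] ennreal_lessI)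
qed

lemma f_at_ray_strict_mono:
  assumes ab: "0 < a" "a < b" "b < 1"
  shows "f_at (ray \<theta> a) < f_at (ray \<theta> b)"
  unfolding f_at_def
proof (rule nn_integral_strict_mono_AE)
  show "(\<integral>\<^sup>+ w. kernel (ray \<theta> a) w \<partial>\<mu>) \<noteq> \<infinity>"
    using f_at_finite_off_circle[of "ray \<theta> a"] ab by (simp add: f_at_def norm_ray)
  show "AE w in \<mu>. kernel (ray \<theta> a) w < kernel (ray \<theta> b) w"
    using AE_norm_eq_1 by eventually_elim (rule kernel_ray_strict_mono[OF _ ab])
qed simp_all

lemma f_at_ray_mono:
  assumes "0 < a" "a \<le> b" "b < 1"
  shows "f_at (ray \<theta> a) \<le> f_at (ray \<theta> b)"
  using f_at_ray_strict_mono[of a b \<theta>] assms by (cases "a = b") auto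

lemma f_at_ray_le_fOne:
  assumes r: "0 < \<rho>" "\<rho> < 1"
  shows "f_at (ray \<theta> \<rho>) \<le> fOne \<mu> \<theta>"
  unfolding f_at_ray_1[symmetric] f_at_def
proof (rule nn_integral_mono_AE, use AE_norm_eq_1 in eventually_elim)
  fix w :: complex assume w: "cmod w = 1"
  have "((\<lambda>s. kernel (ray \<theta> s) w) \<longlongrightarrow> kernel (ray \<theta> 1) w) (at_left 1)"
    unfolding ray_def by (intro kernel_tendsto tendsto_intros) auto
  moreover have "\<forall>\<^sub>F s in at_left 1. kernel (ray \<theta> \<rho>) w \<le> kernel (ray \<theta> s) w"
    using eventually_at_left_real[OF r(2)]
    by eventually_elim (use kernel_ray_strict_mono[OF w] r in \<open>auto intro: less_imp_le\<close>)
  ultimately show "kernel (ray \<theta> \<rho>) w \<le> kernel (ray \<theta> 1) w"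
    by (rule tendsto_lowerbound) simp
qed

lemma f_at_lower_semicontinuous:
  assumes z: "z \<longlonglongrightarrow> z0" and z0: "z0 \<noteq> 0"
  shows "f_at z0 \<le> liminf (\<lambda>n. f_at (z n))"
proof -
  have "f_at z0 = (\<integral>\<^sup>+ w. liminf (\<lambda>n. kernel (z n) w) \<partial>\<mu>)"
    unfolding f_at_def
    by (simp add: lim_imp_Liminf[OF sequentially_bot kernel_tendsto[OF z z0]])
  also have "\<dots> \<le> liminf (\<lambda>n. f_at (z n))"
    unfolding f_at_def by (rule nn_integral_liminf) simp
  finally show ?thesis .
qed

lemma f_at_continuous_off_circle:
  assumes z: "z \<longlonglongrightarrow> z0" and z0: "z0 \<noteq> 0" "cmod z0 \<noteq> 1"
  shows "(\<lambda>n. f_at (z n)) \<longlonglongrightarrow> f_at z0"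
proof -
  define e where "e = \<bar>cmod z0 - 1\<bar> / 2"
  have e: "e > 0" using z0 by (simp add: e_def)
  have "(\<lambda>n. cmod (z n)) \<longlonglongrightarrow> cmod z0" using z by (rule tendsto_norm)
  then have "\<forall>\<^sub>F n in sequentially. dist (cmod (z n)) (cmod z0) < min (cmod z0) e"
    using z0 e by (intro tendstoD) auto
  then have "\<forall>\<^sub>F n in sequentially. z n \<noteq> 0 \<and> e \<le> \<bar>cmod (z n) - 1\<bar>"
  proof eventually_elim
    case (elim n)
    then have d: "\<bar>cmod (z n) - cmod z0\<bar> < cmod z0" "\<bar>cmod (z n) - cmod z0\<bar> < e"
      by (simp_all add: dist_real_def)
    then have "z n \<noteq> 0" by (auto simp: abs_less_iff)
    moreover have "e \<le> \<bar>cmod (z n) - 1\<bar>"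
      using d(2) unfolding e_def by (auto simp: abs_if split: if_split_asm)
    ultimately show ?case by simp
  qed
  then obtain N where N: "\<And>n. n \<ge> N \<Longrightarrow> z n \<noteq> 0 \<and> e \<le> \<bar>cmod (z n) - 1\<bar>"
    unfolding eventually_sequentially by blast
  have hb: "(\<lambda>n. radial_factor (cmod (z n))) \<longlonglongrightarrow> radial_factor (cmod z0)"
    by (rule isCont_tendsto_compose[OF isCont_radial_factor]) (use z0 z in \<open>auto intro: tendsto_intros\<close>)
  then obtain H where H: "\<And>n. radial_factor (cmod (z n)) \<le> H"
    using convergent_imp_Bseq[OF convergentI[OF hb]] unfolding Bseq_def by (auto dest: abs_le_D1)
  have "(\<lambda>i. f_at (z (i + N))) \<longlonglongrightarrow> f_at z0"
    unfolding f_at_def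
  proof (rule nn_integral_dominated_convergence[where w = "\<lambda>_. ennreal (H / e^2)"])
    show "AE w in \<mu>. (\<lambda>i. kernel (z (i + N)) w) \<longlonglongrightarrow> kernel z0 w"
      by (intro AE_I2 kernel_tendsto[OF LIMSEQ_ignore_initial_segment[OF z] z0(1)])
    show "AE w in \<mu>. kernel (z (i + N)) w \<le> ennreal (H / e^2)" for i
      using AE_norm_eq_1
    proof eventually_elim
      case (elim w)
      have "kernel (z (i + N)) w \<le> ennreal (radial_factor (cmod (z (i + N))) / e^2)"
        using N[of "i + N"] e by (intro kernel_le_off_circle[OF elim]) auto
      also have "\<dots> \<le> ennreal (H / e^2)" using H[of "i + N"] by (intro ennreal_leI divide_right_mono) auto
      finally show ?case .
    qed
  qed (simp_all add: emeasure_space_1)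
  then show ?thesis by (rule LIMSEQ_offset)
qed

lemma f_at_small:
  assumes "c > 0"
  obtains \<rho>0 where "0 < \<rho>0" "\<rho>0 < 1" "\<And>z. z \<noteq> 0 \<Longrightarrow> cmod z \<le> \<rho>0 \<Longrightarrow> f_at z < ennreal c"
proof -
  have "\<forall>\<^sub>F \<rho> in at_right 0. radial_factor \<rho> / (\<rho> - 1)^2 < c \<and> \<rho> < 1"
    using order_tendstoD(2)[OF radial_factor_div_sq_tendsto_0 assms] eventually_at_right_real[OF zero_less_one]
    by eventually_elim auto
  then obtain b where b: "b > 0" "\<And>\<rho>. 0 < \<rho> \<Longrightarrow> \<rho> < b \<Longrightarrow> radial_factor \<rho> / (\<rho> - 1)^2 < c \<and> \<rho> < 1"
    unfolding eventually_at_right_field by auto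
  show ?thesis
  proof
    show "0 < min (b/2) (1/2)" "min (b/2) (1/2) < (1::real)" using b(1) by auto
    fix z assume z: "z \<noteq> 0" "cmod z \<le> min (b/2) (1/2)"
    then have "0 < cmod z" "cmod z < b" using b(1) by auto
    then have "radial_factor (cmod z) / (cmod z - 1)^2 < c \<and> cmod z < 1" by (rule b(2))
    then have "radial_factor (cmod z) / (cmod z - 1)^2 < c" "cmod z \<noteq> 1" by auto
    then show "f_at z < ennreal c"
      using f_at_le_off_circle[OF z(1)] assms by (meson ennreal_lessI le_less_trans)
  qed
qed

section \<open>Boundary values on the circle\<close>

lemma fOne_integrand_measurable:
  "(\<lambda>w. inverse (ennreal ((cmod (1 - exp (\<i> * of_real \<theta>) * cnj w))^2))) \<in> borel_measurable \<mu>"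
proof -
  have "(\<lambda>w. (cmod (1 - exp (\<i> * of_real \<theta>) * cnj w))^2) \<in> borel_measurable borel"
    by (intro borel_measurable_continuous_onI continuous_intros)
  from borel_measurable_of_borel[OF this] show ?thesis by measurable
qed

lemma boundary_integrand_measurable_pair:
  assumes "closed J"
  shows "(\<lambda>(w, \<phi>). indicator J \<phi> * inverse (ennreal ((cmod (1 - exp (\<i> * of_real (\<theta>0 + \<phi>)) * cnj w))^2)))
    \<in> borel_measurable (\<mu> \<Otimes>\<^sub>M lborel)"
proof -
  have "(\<lambda>p :: complex \<times> real. (cmod (1 - exp (\<i> * of_real (\<theta>0 + snd p)) * cnj (fst p)))^2) \<in> borel_measurable borel"
    by (intro borel_measurable_continuous_onI continuous_intros)
  then have "(\<lambda>p :: complex \<times> real. inverse (ennreal ((cmod (1 - exp (\<i> * of_real (\<theta>0 + snd p)) * cnj (fst p)))^2)))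
      \<in> borel_measurable borel"
    by measurable
  moreover have "(UNIV \<times> J) \<in> sets (borel :: (complex \<times> real) measure)"
    using assms by (intro borel_closed closed_Times) auto
  then have "(\<lambda>p :: complex \<times> real. indicator (UNIV \<times> J) p :: ennreal) \<in> borel_measurable borel"
    by (rule borel_measurable_indicator)
  ultimately have "(\<lambda>p. indicator (UNIV \<times> J) p *
      inverse (ennreal ((cmod (1 - exp (\<i> * of_real (\<theta>0 + snd p)) * cnj (fst p)))^2))) \<in> borel_measurable borel"
    by (intro borel_measurable_times_ennreal)
  moreover have "(\<lambda>(w, \<phi>). indicator J \<phi> * inverse (ennreal ((cmod (1 - exp (\<i> * of_real (\<theta>0 + \<phi>)) * cnj w))^2)))
      = (\<lambda>p. indicator (UNIV \<times> J) p * inverse (ennreal ((cmod (1 - exp (\<i> * of_real (\<theta>0 + snd p)) * cnj (fst p)))^2)))"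
    by (auto simp: fun_eq_iff indicator_def)
  moreover have "sets (\<mu> \<Otimes>\<^sub>M lborel) = sets (borel :: (complex \<times> real) measure)"
    using sets_pair_measure_cong[OF sets_eq_borel sets_lborel] borel_prod by metis
  ultimately show ?thesis by (subst measurable_cong_sets) auto
qed

text \<open>Integrating \<open>f(1\<^sup>-, \<theta>\<^sub>0 + \<phi>)\<close> over \<open>|\<phi>| \<le> 3\<epsilon>/4\<close> and swapping the integrals, every \<open>w\<close> of the arc
contributes \<open>\<infinity>\<close>.\<close>

lemma arc_null_if_fOne_bounded:
  assumes e: "0 < \<epsilon>" "\<epsilon> \<le> 1"
    and f: "\<And>\<phi>. \<bar>\<phi>\<bar> < \<epsilon> \<Longrightarrow> fOne \<mu> (\<theta>0 + \<phi>) \<le> ennreal B"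
  shows "emeasure \<mu> (arc_nbhd \<theta>0 (\<epsilon>/2)) = 0"
proof -
  define A where "A = arc_nbhd \<theta>0 (\<epsilon>/2)"
  have A[measurable]: "A \<in> sets \<mu>" using open_arc_nbhd sets_eq_borel by (simp add: A_def)
  define J where "J = {-3*\<epsilon>/4..3*\<epsilon>/4}"
  define F where "F w \<phi> = indicator J \<phi> * inverse (ennreal ((cmod (1 - exp (\<i> * of_real (\<theta>0 + \<phi>)) * cnj w))^2))"
    for w \<phi>
  interpret P: pair_sigma_finite \<mu> "lborel :: real measure" ..
  have Fm: "case_prod F \<in> borel_measurable (\<mu> \<Otimes>\<^sub>M lborel)"
    unfolding F_def J_def by (rule boundary_integrand_measurable_pair) auto
  have inner: "(\<integral>\<^sup>+ w. F w \<phi> \<partial>\<mu>) = indicator J \<phi> * fOne \<mu> (\<theta>0 + \<phi>)" for \<phi>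
    unfolding F_def fOne_def by (rule nn_integral_cmult) (rule fOne_integrand_measurable)
  have "\<infinity> * emeasure \<mu> A = (\<integral>\<^sup>+ w. \<infinity> * indicator A w \<partial>\<mu>)"
    by (simp add: nn_integral_cmult_indicator)
  also have "\<dots> \<le> (\<integral>\<^sup>+ w. (\<integral>\<^sup>+ \<phi>. F w \<phi> \<partial>lborel) \<partial>\<mu>)"
  proof (rule nn_integral_mono_AE, use AE_norm_eq_1 in eventually_elim)
    fix w :: complex assume "cmod w = 1"
    then show "\<infinity> * indicator A w \<le> (\<integral>\<^sup>+ \<phi>. F w \<phi> \<partial>lborel)"
      using nn_integral_inverse_dist_sq_infinite[OF _ e, of w \<theta>0]
      by (auto simp: A_def F_def J_def split: split_indicator)
  qed
  also have "\<dots> = (\<integral>\<^sup>+ \<phi>. (\<integral>\<^sup>+ w. F w \<phi> \<partial>\<mu>) \<partial>lborel)"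
    by (rule P.Fubini'[OF Fm, symmetric])
  also have "\<dots> \<le> (\<integral>\<^sup>+ \<phi>. ennreal B * indicator J \<phi> \<partial>lborel)"
    unfolding inner using f e by (intro nn_integral_mono) (auto simp: J_def split: split_indicator)
  also have "\<dots> < \<infinity>" using e by (simp add: nn_integral_cmult_indicator J_def ennreal_mult_less_top)
  finally show ?thesis by (simp add: A_def ennreal_top_mult split: if_splits)
qed

lemma fOne_midpoint_strict:
  assumes e: "0 < \<epsilon>" "\<epsilon> \<le> 1" and fin: "fOne \<mu> \<theta>0 \<noteq> \<infinity>"
    and null: "emeasure \<mu> (arc_nbhd \<theta>0 (\<epsilon>/2)) = 0"
  shows "2 * fOne \<mu> \<theta>0 < fOne \<mu> (\<theta>0 + \<epsilon>/4) + fOne \<mu> (\<theta>0 - \<epsilon>/4)"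
proof -
  define h where "h = \<epsilon>/4"
  have "0 < h" "h < \<epsilon>/2" "\<epsilon>/2 \<le> pi" using e pi_gt3 by (auto simp: h_def)
  then have cos_gt: "cos (\<epsilon>/2) < cos h" and cos_lt1: "cos h < 1"
    using cos_monotone_0_pi[of h "\<epsilon>/2"] cos_monotone_0_pi[of 0 h] by auto
  define k where "k \<theta> w = inverse (ennreal ((cmod (1 - exp (\<i> * of_real \<theta>) * cnj w))^2))" for \<theta> w
  have km[measurable]: "k \<theta> \<in> borel_measurable \<mu>" for \<theta>
    unfolding k_def[abs_def] by (rule fOne_integrand_measurable)
  have fk: "fOne \<mu> \<theta> = (\<integral>\<^sup>+ w. k \<theta> w \<partial>\<mu>)" for \<theta> by (simp add: fOne_def k_def)
  have "arc_nbhd \<theta>0 (\<epsilon>/2) \<in> sets \<mu>" using open_arc_nbhd sets_eq_borel by simp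
  then have "AE w in \<mu>. w \<notin> arc_nbhd \<theta>0 (\<epsilon>/2)" using null by (intro AE_not_in) (simp add: null_sets_def)
  with AE_norm_eq_1 have "AE w in \<mu>. cmod w = 1 \<and> \<not> cos (\<epsilon>/2) < Re (exp (\<i> * of_real \<theta>0) * cnj w)"
    by eventually_elim (simp add: arc_nbhd_def)
  then have lt: "AE w in \<mu>. 2 * k \<theta>0 w < k (\<theta>0 + h) w + k (\<theta>0 - h) w"
  proof eventually_elim
    case (elim w)
    define v where "v = exp (\<i> * of_real \<theta>0) * cnj w"
    have v1: "cmod v = 1" using elim by (simp add: v_def norm_mult)
    have cs: "(Re v)^2 + (Im v)^2 = 1" using v1 by (metis cmod_power2 power_one)
    have c_lt: "Re v < cos h" using cos_gt elim by (simp add: v_def)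
    have k: "k (\<theta>0 + x) w = inverse (ennreal (2 - 2 * (cos x * Re v - sin x * Im v)))" for x
    proof -
      have "exp (\<i> * of_real (\<theta>0 + x)) * cnj w = cis x * v"
        by (simp add: v_def cis_conv_exp distrib_left exp_add mult_ac)
      then show ?thesis using v1 by (simp add: k_def norm_one_minus_sq_unit norm_mult)
    qed
    note sc = inverse_dist_sq_midpoint_strict[OF cs sin_cos_squared_add2 c_lt cos_lt1]
    have "2 * k \<theta>0 w = ennreal 2 * ennreal (inverse (2 - 2 * Re v))"
      using k[of 0] sc(3) by (simp add: inverse_ennreal)
    also have "\<dots> = ennreal (2 / (2 - 2 * Re v))"
      using sc(3) by (simp add: ennreal_mult' divide_inverse)
    also have "\<dots> < ennreal (1 / (2 - 2 * (cos h * Re v - sin h * Im v)) + 1 / (2 - 2 * (cos h * Re v + sin h * Im v)))"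
      using sc by (intro ennreal_lessI) (auto intro: add_pos_pos)
    also have "\<dots> = k (\<theta>0 + h) w + k (\<theta>0 - h) w"
      using k[of h] k[of "-h"] sc(1,2)
      by (simp add: ennreal_plus inverse_ennreal inverse_eq_divide)
    finally show ?case .
  qed
  have "2 * fOne \<mu> \<theta>0 = (\<integral>\<^sup>+ w. 2 * k \<theta>0 w \<partial>\<mu>)" by (simp add: fk nn_integral_cmult)
  also have "\<dots> < (\<integral>\<^sup>+ w. k (\<theta>0 + h) w + k (\<theta>0 - h) w \<partial>\<mu>)"
    using lt fin by (intro nn_integral_strict_mono_AE) (auto simp: fk nn_integral_cmult ennreal_mult_eq_top_iff)
  also have "\<dots> = fOne \<mu> (\<theta>0 + h) + fOne \<mu> (\<theta>0 - h)" unfolding fk by (rule nn_integral_add) auto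
  finally show ?thesis by (simp add: h_def)
qed

lemma fOne_no_finite_local_max:
  assumes "0 < \<epsilon>" and fin: "fOne \<mu> \<theta>0 \<noteq> \<infinity>"
    and max: "\<And>\<phi>. \<bar>\<phi>\<bar> < \<epsilon> \<Longrightarrow> fOne \<mu> (\<theta>0 + \<phi>) \<le> fOne \<mu> \<theta>0"
  shows False
proof -
  define \<delta> where "\<delta> = min \<epsilon> 1"
  have d: "0 < \<delta>" "\<delta> \<le> 1" using assms by (auto simp: \<delta>_def)
  obtain B where B: "fOne \<mu> \<theta>0 = ennreal B" using fin by (cases "fOne \<mu> \<theta>0") auto
  have max': "fOne \<mu> (\<theta>0 + \<phi>) \<le> fOne \<mu> \<theta>0" if "\<bar>\<phi>\<bar> < \<delta>" for \<phi>
    using max that by (simp add: \<delta>_def)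
  have "2 * fOne \<mu> \<theta>0 < fOne \<mu> (\<theta>0 + \<delta>/4) + fOne \<mu> (\<theta>0 + - (\<delta>/4))"
    using fOne_midpoint_strict[OF d fin arc_null_if_fOne_bounded[OF d, of \<theta>0 B]] max' B by simp
  also have "\<dots> \<le> fOne \<mu> \<theta>0 + fOne \<mu> \<theta>0" using d by (intro add_mono max') auto
  finally show False by (simp add: mult_2)
qed

end

section \<open>The superlevel set\<close>

locale circle_measure_level = circle_measure +
  fixes t :: real
  assumes t_pos: "t > 0"
begin

definition superlevel :: "complex set" where
  "superlevel = {z. z \<noteq> 0 \<and> ennreal (1/t) < f_at z}"

lemma open_superlevel: "open superlevel"
proof -
  have "closed (- superlevel)"
    unfolding closed_sequential_limits
  proof (intro allI impI)
    fix x l assume a: "(\<forall>n. x n \<in> - superlevel) \<and> x \<longlonglongrightarrow> l"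
    show "l \<in> - superlevel"
    proof (cases "l = 0")
      case False
      have "eventually (\<lambda>n. x n \<noteq> 0) sequentially"
        using a False by (intro tendsto_imp_eventually_ne) auto
      then have "eventually (\<lambda>n. f_at (x n) \<le> ennreal (1/t)) sequentially"
        by eventually_elim (use a in \<open>auto simp: superlevel_def\<close>)
      then have "limsup (\<lambda>n. f_at (x n)) \<le> ennreal (1/t)" by (rule Limsup_bounded)
      moreover have "f_at l \<le> liminf (\<lambda>n. f_at (x n))"
        using a False by (intro f_at_lower_semicontinuous) auto
      moreover have "liminf (\<lambda>n. f_at (x n)) \<le> limsup (\<lambda>n. f_at (x n))"
        by (rule Liminf_le_Limsup) simp
      ultimately have "f_at l \<le> ennreal (1/t)" by order
      then show ?thesis by (auto simp: superlevel_def)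
    qed (simp add: superlevel_def)
  qed
  then show ?thesis by (simp add: closed_def)
qed

lemma inverse_cnj_superlevel: "z \<in> superlevel \<Longrightarrow> 1 / cnj z \<in> superlevel"
  by (auto simp: superlevel_def f_at_inverse_cnj)

lemma zero_notin_closure_superlevel: "0 \<notin> closure superlevel"
proof
  assume "0 \<in> closure superlevel"
  obtain \<rho>0 where \<rho>0: "0 < \<rho>0" "\<And>z. z \<noteq> 0 \<Longrightarrow> cmod z \<le> \<rho>0 \<Longrightarrow> f_at z < ennreal (1/t)"
    using f_at_small[of "1/t"] t_pos by auto
  obtain y where y: "y \<in> superlevel" "dist y 0 < \<rho>0"
    using \<open>0 \<in> closure superlevel\<close> \<rho>0(1) by (meson closure_approachable)
  then have "f_at y < ennreal (1/t)" using \<rho>0(2)[of y] by (simp add: superlevel_def)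
  moreover have "ennreal (1/t) < f_at y" using y(1) by (simp add: superlevel_def)
  ultimately show False by (meson order.asym)
qed

definition sublevel_radii :: "real \<Rightarrow> real set" where
  "sublevel_radii \<theta> = {r. 0 < r \<and> r < 1 \<and> fP \<mu> r \<theta> < 1 / t}"

lemma r_t_eq_Sup: "r_t \<mu> t \<theta> = Sup (sublevel_radii \<theta>)"
  by (simp add: r_t_def sublevel_radii_def)

lemma bdd_above_sublevel_radii: "bdd_above (sublevel_radii \<theta>)"
  by (rule bdd_aboveI[of _ 1]) (auto simp: sublevel_radii_def)

lemma mem_sublevel_radii_iff:
  assumes "0 < r" "r < 1"
  shows "r \<in> sublevel_radii \<theta> \<longleftrightarrow> f_at (ray \<theta> r) < ennreal (1/t)"
proof -
  have e: "f_at (ray \<theta> r) = ennreal (fP \<mu> r \<theta>)" using assms by (intro f_at_ray_eq_fP) auto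
  then have "fP \<mu> r \<theta> \<ge> 0" using f_at_pos[of "ray \<theta> r"] assms by simp
  then show ?thesis using assms t_pos by (simp add: sublevel_radii_def e ennreal_less_iff)
qed

lemma small_mem_sublevel_radii:
  obtains \<rho>0 where "0 < \<rho>0" "\<And>\<theta>. \<rho>0 \<in> sublevel_radii \<theta>"
proof -
  obtain \<rho>0 where r: "0 < \<rho>0" "\<rho>0 < 1" "\<And>z. z \<noteq> 0 \<Longrightarrow> cmod z \<le> \<rho>0 \<Longrightarrow> f_at z < ennreal (1/t)"
    using f_at_small[of "1/t"] t_pos by auto
  then show ?thesis using that[of \<rho>0] by (simp add: mem_sublevel_radii_iff norm_ray)
qed

lemma r_t_pos: "r_t \<mu> t \<theta> > 0"
proof -
  obtain \<rho>0 where "0 < \<rho>0" "\<rho>0 \<in> sublevel_radii \<theta>" using small_mem_sublevel_radii by metis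
  moreover have "\<rho>0 \<le> Sup (sublevel_radii \<theta>)" using calculation(2) bdd_above_sublevel_radii by (rule cSup_upper)
  ultimately show ?thesis by (simp add: r_t_eq_Sup)
qed

lemma superlevel_in_closed_disc:
  assumes z: "z \<in> superlevel" "cmod z \<le> 1"
  shows "Arg z \<in> U_t \<mu> t \<and> r_t \<mu> t (Arg z) < cmod z"
proof -
  define \<theta> where "\<theta> = Arg z"
  define \<rho> where "\<rho> = cmod z"
  have zr: "z = ray \<theta> \<rho>" by (simp add: \<theta>_def \<rho>_def ray_Arg_norm)
  have rp: "\<rho> > 0" "\<rho> \<le> 1" and lt: "ennreal (1/t) < f_at z"
    using z by (auto simp: \<rho>_def superlevel_def)
  have "f_at z \<le> fOne \<mu> \<theta>"
    using zr f_at_ray_le_fOne[of \<rho> \<theta>] f_at_ray_1[of \<theta>] rp by (cases "\<rho> = 1") auto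
  then have U: "\<theta> \<in> U_t \<mu> t"
    using lt unfolding U_t_def \<theta>_def using mpi_less_Arg Arg_le_pi by auto
  obtain \<epsilon> where \<epsilon>: "\<epsilon> > 0" "ball z \<epsilon> \<subseteq> superlevel"
    using open_superlevel z(1) by (auto simp: open_contains_ball)
  \<comment> \<open>Radii just below \<open>\<rho>\<close> lie in the ball, radii above \<open>\<rho>\<close> are excluded by radial monotonicity.\<close>
  have le: "r \<le> \<rho> - \<epsilon>" if r: "r \<in> sublevel_radii \<theta>" for r
  proof (rule ccontr)
    assume nle: "\<not> r \<le> \<rho> - \<epsilon>"
    have r01: "0 < r" "r < 1" using r by (auto simp: sublevel_radii_def)
    have small: "f_at (ray \<theta> r) < ennreal (1/t)" using mem_sublevel_radii_iff[OF r01] r by simp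
    show False
    proof (cases "r < \<rho>")
      case True
      then have "dist z (ray \<theta> r) < \<epsilon>" using nle zr dist_ray[of \<theta> \<rho> r] by simp
      then have "ray \<theta> r \<in> superlevel" using \<epsilon> by auto
      then show False using small unfolding superlevel_def by (auto dest: order.asym)
    next
      case False
      then have "f_at z \<le> f_at (ray \<theta> r)" using zr rp r01 by (simp add: f_at_ray_mono)
      then show False using small lt by order
    qed
  qed
  obtain \<rho>0 where "\<rho>0 \<in> sublevel_radii \<theta>" using small_mem_sublevel_radii by metis
  then have "Sup (sublevel_radii \<theta>) \<le> \<rho> - \<epsilon>" using le by (intro cSup_least) auto
  then show ?thesis using U \<epsilon> by (simp add: r_t_eq_Sup \<theta>_def \<rho>_def)
qed

lemma ray_mem_superlevel:
  assumes U: "\<theta> \<in> U_t \<mu> t" and r: "r_t \<mu> t \<theta> < r" "r < 1 / r_t \<mu> t \<theta>"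
  shows "ray \<theta> r \<in> superlevel"
proof -
  have rt: "r_t \<mu> t \<theta> > 0" by (rule r_t_pos)
  have inside: "ennreal (1/t) < f_at (ray \<theta> r)" if r1: "r_t \<mu> t \<theta> < r" "r < 1" for r
  proof (rule ccontr)
    assume "\<not> ennreal (1/t) < f_at (ray \<theta> r)"
    then have le: "f_at (ray \<theta> r) \<le> ennreal (1/t)" by simp
    have "r \<le> Sup (sublevel_radii \<theta>)"
    proof (rule dense_le_bounded)
      fix r' assume r': "0 < r'" "r' < r"
      then have "f_at (ray \<theta> r') < f_at (ray \<theta> r)" using r1 by (intro f_at_ray_strict_mono) auto
      then have "r' \<in> sublevel_radii \<theta>" using mem_sublevel_radii_iff[of r' \<theta>] r' r1 le by simp
      then show "r' \<le> Sup (sublevel_radii \<theta>)" using bdd_above_sublevel_radii by (rule cSup_upper)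
    qed (use r1 rt in simp)
    then show False using r1 by (simp add: r_t_eq_Sup)
  qed
  have rp: "r > 0" using r rt by simp
  have "ennreal (1/t) < f_at (ray \<theta> r)"
  proof (cases r "1::real" rule: linorder_cases)
    case equal then show ?thesis using U by (simp add: U_t_def f_at_ray_1)
  next
    case greater
    have "r_t \<mu> t \<theta> < 1 / r" using r rt rp by (simp add: field_simps)
    then show ?thesis using inside[of "1/r"] f_at_ray_inverse[OF rp] greater by simp
  qed (use inside r in simp)
  then show ?thesis using rp by (simp add: superlevel_def)
qed

lemma Delta_eq_superlevel: "Delta \<mu> t = superlevel"
proof
  show "Delta \<mu> t \<subseteq> superlevel"
    unfolding Delta_def using ray_mem_superlevel by (auto simp: ray_def)
next
  show "superlevel \<subseteq> Delta \<mu> t"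
  proof
    fix z assume zD: "z \<in> superlevel"
    then have z0: "z \<noteq> 0" by (simp add: superlevel_def)
    have rt: "r_t \<mu> t (Arg z) > 0" by (rule r_t_pos)
    have "Arg z \<in> U_t \<mu> t \<and> r_t \<mu> t (Arg z) < cmod z \<and> cmod z < 1 / r_t \<mu> t (Arg z)"
    proof (cases "cmod z \<le> 1")
      case True
      with superlevel_in_closed_disc[OF zD] have "Arg z \<in> U_t \<mu> t" "r_t \<mu> t (Arg z) < cmod z" "r_t \<mu> t (Arg z) < 1"
        by auto
      moreover from this(3) have "1 < 1 / r_t \<mu> t (Arg z)" using rt by (simp add: field_simps)
      ultimately show ?thesis using True by simp
    next
      case False
      define z' where "z' = 1 / cnj z"
      have z': "z' = ray (Arg z) (1 / cmod z)"
        using inverse_cnj_ray[of "cmod z" "Arg z"] z0 by (simp add: z'_def ray_Arg_norm)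
      have "Arg z' = Arg z" "cmod z' = 1 / cmod z"
        unfolding z' using z0 mpi_less_Arg Arg_le_pi by (auto simp: Arg_ray norm_ray)
      moreover have "z' \<in> superlevel" using inverse_cnj_superlevel[OF zD] by (simp add: z'_def)
      moreover have "1 / cmod z \<le> 1" using False by (simp add: divide_le_eq_1)
      ultimately have U: "Arg z \<in> U_t \<mu> t" and lt: "r_t \<mu> t (Arg z) < 1 / cmod z"
        using superlevel_in_closed_disc[of z'] False by auto
      moreover have "1 / cmod z < 1" using False by (simp add: divide_less_eq_1)
      ultimately have "r_t \<mu> t (Arg z) < cmod z" using False by linarith
      moreover have "cmod z < 1 / r_t \<mu> t (Arg z)" using lt rt z0 by (simp add: field_simps)
      ultimately show ?thesis using U by simp
    qed
    then show "z \<in> Delta \<mu> t"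
      unfolding Delta_def
      by (intro CollectI exI[of _ "cmod z"] exI[of _ "Arg z"]) (use ray_Arg_norm[of z] in \<open>simp add: ray_def\<close>)
  qed
qed

lemma level_in_open_disc_in_closure:
  assumes z: "z \<noteq> 0" "cmod z < 1" "f_at z = ennreal (1/t)"
  shows "z \<in> closure superlevel"
  unfolding closure_approachable
proof (intro allI impI)
  fix \<epsilon> :: real assume "\<epsilon> > 0"
  define \<theta> where "\<theta> = Arg z"
  define \<rho> where "\<rho> = cmod z"
  have zr: "z = ray \<theta> \<rho>" by (simp add: \<theta>_def \<rho>_def ray_Arg_norm)
  define r where "r = min (\<rho> + \<epsilon>/2) ((\<rho> + 1)/2)"
  have "0 < \<rho>" "\<rho> < 1" using z by (auto simp: \<rho>_def)
  moreover have "r \<le> (\<rho> + 1)/2" "r \<le> \<rho> + \<epsilon>/2" unfolding r_def by (rule min.cobounded2, rule min.cobounded1)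
  moreover have "\<rho> < r" using \<open>\<rho> < 1\<close> \<open>\<epsilon> > 0\<close> by (simp add: r_def)
  ultimately have rp: "0 < \<rho>" "\<rho> < r" "r < 1" "\<bar>r - \<rho>\<bar> < \<epsilon>" using \<open>\<epsilon> > 0\<close> by auto
  then have "f_at z < f_at (ray \<theta> r)" unfolding zr by (intro f_at_ray_strict_mono)
  then have "ray \<theta> r \<in> superlevel" using z rp by (simp add: superlevel_def)
  moreover have "dist (ray \<theta> r) z < \<epsilon>" using rp by (simp add: zr dist_ray)
  ultimately show "\<exists>y\<in>superlevel. dist y z < \<epsilon>" by blast
qed

lemma level_on_circle_in_closure:
  assumes z: "cmod z = 1" "f_at z = ennreal (1/t)"
  shows "z \<in> closure superlevel"
proof (rule ccontr)
  assume "z \<notin> closure superlevel"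
  then obtain \<epsilon> where \<epsilon>: "\<epsilon> > 0" "\<And>y. y \<in> superlevel \<Longrightarrow> \<epsilon> \<le> dist y z"
    unfolding closure_approachable by (auto simp: not_less)
  define \<theta>0 where "\<theta>0 = Arg z"
  have ze: "z = exp (\<i> * of_real \<theta>0)" using ray_Arg_norm[of z] z by (simp add: \<theta>0_def ray_def)
  have f0: "fOne \<mu> \<theta>0 = ennreal (1/t)" using z f_at_exp_eq_fOne[of \<theta>0] ze by simp
  show False
  proof (rule fOne_no_finite_local_max[OF \<epsilon>(1)])
    fix \<phi> :: real assume \<phi>: "\<bar>\<phi>\<bar> < \<epsilon>"
    define y where "y = exp (\<i> * of_real (\<theta>0 + \<phi>))"
    have "y - z = exp (\<i> * of_real \<theta>0) * (exp (\<i> * of_real \<phi>) - 1)"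
      by (simp add: y_def ze distrib_left exp_add algebra_simps)
    then have "dist y z \<le> \<bar>\<phi>\<bar>" using norm_exp_minus_one_le[of \<phi>] by (simp add: dist_norm norm_mult)
    then have "y \<notin> superlevel" using \<epsilon>(2)[of y] \<phi> by (meson linorder_not_le order_le_less_trans)
    then show "fOne \<mu> (\<theta>0 + \<phi>) \<le> fOne \<mu> \<theta>0"
      using f0 f_at_exp_eq_fOne[of "\<theta>0 + \<phi>"] by (auto simp: superlevel_def y_def)
  qed (use f0 in simp)
qed

lemma level_in_closure:
  assumes z: "z \<noteq> 0" "f_at z = ennreal (1/t)"
  shows "z \<in> closure superlevel"
proof (cases "cmod z" "1::real" rule: linorder_cases)
  case greater
  define z' where "z' = 1 / cnj z"
  have "z' \<noteq> 0" using z by (simp add: z'_def)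
  moreover have "cmod z' < 1" using greater by (simp add: z'_def norm_divide divide_less_eq_1)
  moreover have "f_at z' = ennreal (1/t)" using z f_at_inverse_cnj[OF z(1)] by (simp add: z'_def)
  ultimately have "z' \<in> closure superlevel" by (rule level_in_open_disc_in_closure)
  then obtain d where d: "\<And>n. d n \<in> superlevel" "d \<longlonglongrightarrow> z'"
    unfolding closure_sequential by blast
  have "(\<lambda>n. 1 / cnj (d n)) \<longlonglongrightarrow> 1 / cnj z'"
    using d(2) \<open>z' \<noteq> 0\<close> by (intro tendsto_intros) auto
  then have "(\<lambda>n. 1 / cnj (d n)) \<longlonglongrightarrow> z" by (simp add: z'_def)
  moreover have "\<forall>n. 1 / cnj (d n) \<in> superlevel" using inverse_cnj_superlevel d(1) by blast
  ultimately show ?thesis unfolding closure_sequential by (intro exI[of _ "\<lambda>n. 1 / cnj (d n)"]) simp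
next
  case less
  show ?thesis by (rule level_in_open_disc_in_closure[OF z(1) less z(2)])
next
  case equal
  show ?thesis by (rule level_on_circle_in_closure[OF equal z(2)])
qed

lemma f_at_level_of_frontier:
  assumes "z \<in> closure superlevel" "z \<notin> superlevel" "cmod z \<noteq> 1"
  shows "z \<noteq> 0 \<and> f_at z = ennreal (1/t)"
proof -
  have z0: "z \<noteq> 0" using assms zero_notin_closure_superlevel by auto
  obtain d where d: "\<And>n. d n \<in> superlevel" "d \<longlonglongrightarrow> z"
    using assms(1) unfolding closure_sequential by blast
  have "(\<lambda>n. f_at (d n)) \<longlonglongrightarrow> f_at z" by (rule f_at_continuous_off_circle[OF d(2) z0 assms(3)])
  moreover have "ennreal (1/t) \<le> f_at (d n)" for n using d(1)[of n] by (auto simp: superlevel_def)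
  ultimately have "ennreal (1/t) \<le> f_at z" by (intro LIMSEQ_le_const) auto
  then show ?thesis using assms(2) z0 by (auto simp: superlevel_def)
qed

lemma f_at_less_outside_closure:
  assumes "z \<notin> closure superlevel" "z \<noteq> 0"
  shows "f_at z < ennreal (1/t)"
proof -
  have "z \<notin> superlevel" using assms(1) closure_subset by blast
  then have "f_at z \<le> ennreal (1/t)" using assms(2) by (simp add: superlevel_def)
  moreover have "f_at z \<noteq> ennreal (1/t)" using assms level_in_closure by blast
  ultimately show ?thesis by simp
qed

lemma Tfun_less_iff:
  assumes "z \<noteq> 0" shows "Tfun \<mu> z < t \<longleftrightarrow> ennreal (1/t) < f_at z"
proof (cases "f_at z")
  case (real r)
  then have r: "r > 0" using f_at_pos[OF assms] by simp
  have "1/r < t \<longleftrightarrow> 1 < t*r" using r by (simp add: divide_less_eq)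
  moreover have "1/t < r \<longleftrightarrow> 1 < r*t" using t_pos by (simp add: divide_less_eq)
  ultimately show ?thesis using real r t_pos by (simp add: Tfun_eq_f_at[OF assms] ennreal_less_iff mult.commute)
qed (use t_pos in \<open>simp add: Tfun_eq_f_at[OF assms]\<close>)

lemma Tfun_greater_iff:
  assumes "z \<noteq> 0" shows "t < Tfun \<mu> z \<longleftrightarrow> f_at z < ennreal (1/t)"
proof (cases "f_at z")
  case (real r)
  then have r: "r > 0" using f_at_pos[OF assms] by simp
  have "t < 1/r \<longleftrightarrow> t*r < 1" using r by (simp add: less_divide_eq)
  moreover have "r < 1/t \<longleftrightarrow> r*t < 1" using t_pos by (simp add: less_divide_eq)
  ultimately show ?thesis using real r t_pos by (simp add: Tfun_eq_f_at[OF assms] ennreal_less_iff mult.commute)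
qed (use t_pos in \<open>simp add: Tfun_eq_f_at[OF assms]\<close>)

end

theorem theorem4p6:
  fixes \<mu> :: "complex measure" and t :: real
  assumes "circ_meas \<mu>" and "t > 0"
  shows "(\<forall>z\<in>Delta \<mu> t. 1 / cnj z \<in> Delta \<mu> t)
    \<and> Delta \<mu> t = {z. z \<noteq> 0 \<and> Tfun \<mu> z < t}
    \<and> (\<forall>z. z \<notin> closure (Delta \<mu> t) \<and> z \<noteq> 0 \<longrightarrow> Tfun \<mu> z > t)
    \<and> (\<forall>z\<in>frontier (Delta \<mu> t) \<inter> sphere 0 1. Tfun \<mu> z \<ge> t)
    \<and> (\<forall>z\<in>frontier (Delta \<mu> t) - sphere 0 1. Tfun \<mu> z = t)"
proof -
  interpret circle_measure_level \<mu> t by unfold_locales (use assms in auto)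
  have frontier: "frontier (Delta \<mu> t) = closure superlevel - superlevel"
    unfolding Delta_eq_superlevel frontier_def using open_superlevel by (simp add: interior_open)
  have symmetric: "\<forall>z\<in>Delta \<mu> t. 1 / cnj z \<in> Delta \<mu> t"
    using inverse_cnj_superlevel by (simp add: Delta_eq_superlevel)
  have sublevel: "Delta \<mu> t = {z. z \<noteq> 0 \<and> Tfun \<mu> z < t}"
    unfolding Delta_eq_superlevel superlevel_def by (auto simp: Tfun_less_iff)
  have outside: "\<forall>z. z \<notin> closure (Delta \<mu> t) \<and> z \<noteq> 0 \<longrightarrow> Tfun \<mu> z > t"
    using f_at_less_outside_closure by (simp add: Delta_eq_superlevel Tfun_greater_iff)
  have on_circle: "\<forall>z\<in>frontier (Delta \<mu> t) \<inter> sphere 0 1. Tfun \<mu> z \<ge> t"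
  proof
    fix z assume "z \<in> frontier (Delta \<mu> t) \<inter> sphere 0 1"
    then have "z \<noteq> 0" "z \<notin> superlevel" using zero_notin_closure_superlevel by (auto simp: frontier)
    then show "Tfun \<mu> z \<ge> t" using Tfun_less_iff[of z] by (simp add: superlevel_def not_less[symmetric])
  qed
  have off_circle: "\<forall>z\<in>frontier (Delta \<mu> t) - sphere 0 1. Tfun \<mu> z = t"
  proof
    fix z assume "z \<in> frontier (Delta \<mu> t) - sphere 0 1"
    then have "z \<noteq> 0 \<and> f_at z = ennreal (1/t)" using f_at_level_of_frontier by (simp add: frontier)
    then show "Tfun \<mu> z = t" using t_pos by (simp add: Tfun_eq_f_at)
  qed
  show ?thesis using symmetric sublevel outside on_circle off_circle by (intro conjI)
qed

end
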